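(* Let $G\in\mathcal{RG}^{{\underline{\kappa}},*}_{g,n}$ be non-bipartite and $\underline b\in\mathbb R^n$. A point $w\in\operatorname{vp}_G^{-1}(\underline b)$ is a vertex of $P_G(\underline b)$ if and only if $w(e)\ge0$ for all $e\in E(G)\setminus S(G)$ and the edge set $F=\{e\in E(G)\setminus S(G):w(e)>0\}$ forms a disjoint union of trees and/or one-odd-cycle graphs. Moreover, the cone of feasible directions of $P_G(\underline b)$ at such a vertex is $\{v\in\operatorname{vp}_G^{-1}(0):v(e)\ge0\ \forall e\in E(G)\setminus(S(G)\cup F)\}$; in particular it depends only on $F$ and not on $\underline b$.
   Context: $\mathcal{RG}^{{\underline{\kappa}},*}_{g,n}$: connected ribbon graphs of genus $g$ with $n$ labeled vertices and faces of odd degrees ${\underline{\kappa}}$. $\operatorname{vp}_G:\mathbb R^{E(G)}\to\mathbb R^n$, $\operatorname{vp}_G(w)_v=\sum_e a_{ve}w(e)$ ($a_{ve}=2$ for a loop at $v$, $1$ for other incident edges, $0$ otherwise). Static edges $S(G)$: edges $e$ such that some component of $G-e$ is bipartite. $P_G(\underline b)=\{w\in\operatorname{vp}_G^{-1}(\underline b):w(e)\ge0\ \forall e\in E(G)\setminus S(G)\}$. A one-odd-cycle graph is a connected graph with exactly one simple cycle, of odd length. The cone of feasible directions of a polyhedron $P$ at $p$ is $\{v: p+\varepsilon v\in P\text{ for some }\varepsilon>0\}$. *)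

theory Defs
  imports Complex_Main "HOL-Library.Multiset"
begin

text \<open>Ribbon graphs are encoded by a finite set H of half-edges, a vertex rotation
  s0 (a permutation of H whose cycles are the vertices), an edge involution s1
  (fixed-point free involution of H whose orbits are the edges) and a vertex
  labelling vl : H -> {0..<n} (vertex i of the paper is label i-1).
  Real vectors indexed by E(G) are functions on 'h set vanishing off E(G);
  vectors in R^n are functions nat => real of which only arguments < n matter.\<close>

definition orbit :: "('h \<Rightarrow> 'h) \<Rightarrow> 'h \<Rightarrow> 'h set" where
  "orbit f h = {(f ^^ k) h | k. True}"

definition edges :: "'h set \<Rightarrow> ('h \<Rightarrow> 'h) \<Rightarrow> 'h set set" where
  "edges H s1 = {{h, s1 h} | h. h \<in> H}"

definition faces :: "'h set \<Rightarrow> ('h \<Rightarrow> 'h) \<Rightarrow> ('h \<Rightarrow> 'h) \<Rightarrow> 'h set set" where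
  "faces H s0 s1 = {orbit (s0 \<circ> s1) h | h. h \<in> H}"

definition joins :: "('h \<Rightarrow> nat) \<Rightarrow> 'h set \<Rightarrow> nat \<Rightarrow> nat \<Rightarrow> bool" where
  "joins vl e u v \<longleftrightarrow> (\<exists>h h'. e = {h, h'} \<and> h \<noteq> h' \<and> vl h = u \<and> vl h' = v)"

definition adj :: "('h \<Rightarrow> nat) \<Rightarrow> 'h set set \<Rightarrow> nat \<Rightarrow> nat \<Rightarrow> bool" where
  "adj vl F u v \<longleftrightarrow> (\<exists>e\<in>F. joins vl e u v)"

definition comp :: "('h \<Rightarrow> nat) \<Rightarrow> 'h set set \<Rightarrow> nat \<Rightarrow> nat set" where
  "comp vl F v = {u. (adj vl F)\<^sup>*\<^sup>* v u}"

definition edges_in :: "('h \<Rightarrow> nat) \<Rightarrow> 'h set set \<Rightarrow> nat set \<Rightarrow> 'h set set" where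
  "edges_in vl F K = {e \<in> F. \<exists>h\<in>e. vl h \<in> K}"

definition bipartite_on :: "('h \<Rightarrow> nat) \<Rightarrow> 'h set set \<Rightarrow> nat set \<Rightarrow> bool" where
  "bipartite_on vl F K \<longleftrightarrow>
     (\<exists>c :: nat \<Rightarrow> bool. \<forall>e\<in>edges_in vl F K. \<forall>u v. joins vl e u v \<longrightarrow> c u \<noteq> c v)"

definition connected_graph :: "nat \<Rightarrow> ('h \<Rightarrow> nat) \<Rightarrow> 'h set set \<Rightarrow> bool" where
  "connected_graph n vl F \<longleftrightarrow> (\<forall>u<n. \<forall>v<n. (adj vl F)\<^sup>*\<^sup>* u v)"

definition is_ribbon_graph ::
  "nat \<Rightarrow> nat \<Rightarrow> nat list \<Rightarrow> 'h set \<Rightarrow> ('h \<Rightarrow> 'h) \<Rightarrow> ('h \<Rightarrow> 'h) \<Rightarrow> ('h \<Rightarrow> nat) \<Rightarrow> bool" where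
  "is_ribbon_graph g n \<kappa> H s0 s1 vl \<longleftrightarrow>
     finite H \<and> bij_betw s0 H H \<and> bij_betw s1 H H
   \<and> (\<forall>h\<in>H. s1 h \<noteq> h \<and> s1 (s1 h) = h)
   \<and> vl ` H = {0..<n}
   \<and> (\<forall>h\<in>H. \<forall>h'\<in>H. vl h = vl h' \<longleftrightarrow> h' \<in> orbit s0 h)
   \<and> image_mset card (mset_set (faces H s0 s1)) = mset \<kappa>
   \<and> (\<forall>k\<in>set \<kappa>. odd k)
   \<and> int n - int (card (edges H s1)) + int (length \<kappa>) = 2 - 2 * int g
   \<and> connected_graph n vl (edges H s1)"

definition bipartite :: "nat \<Rightarrow> ('h \<Rightarrow> nat) \<Rightarrow> 'h set set \<Rightarrow> bool" where
  "bipartite n vl F \<longleftrightarrow> bipartite_on vl F {0..<n}"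

definition static_edges :: "nat \<Rightarrow> ('h \<Rightarrow> nat) \<Rightarrow> 'h set set \<Rightarrow> 'h set set" where
  "static_edges n vl E = {e \<in> E. \<exists>v<n. bipartite_on vl (E - {e}) (comp vl (E - {e}) v)}"

text \<open>a_{ve}: number of half-edges of e at v (2 for a loop at v)\<close>
definition vp :: "('h \<Rightarrow> nat) \<Rightarrow> 'h set set \<Rightarrow> ('h set \<Rightarrow> real) \<Rightarrow> nat \<Rightarrow> real" where
  "vp vl E w v = (\<Sum>e\<in>E. real (card {h\<in>e. vl h = v}) * w e)"

definition edge_space :: "'h set set \<Rightarrow> ('h set \<Rightarrow> real) set" where
  "edge_space E = {w. \<forall>e. e \<notin> E \<longrightarrow> w e = 0}"

definition vp_preimage :: "nat \<Rightarrow> ('h \<Rightarrow> nat) \<Rightarrow> 'h set set \<Rightarrow> (nat \<Rightarrow> real) \<Rightarrow> ('h set \<Rightarrow> real) set" where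
  "vp_preimage n vl E b = {w \<in> edge_space E. \<forall>v<n. vp vl E w v = b v}"

definition P_G :: "nat \<Rightarrow> ('h \<Rightarrow> nat) \<Rightarrow> 'h set set \<Rightarrow> (nat \<Rightarrow> real) \<Rightarrow> ('h set \<Rightarrow> real) set" where
  "P_G n vl E b = {w \<in> vp_preimage n vl E b. \<forall>e \<in> E - static_edges n vl E. w e \<ge> 0}"

definition is_vertex :: "('e \<Rightarrow> real) set \<Rightarrow> ('e \<Rightarrow> real) \<Rightarrow> bool" where
  "is_vertex P w \<longleftrightarrow> w \<in> P \<and>
     (\<forall>u\<in>P. \<forall>v\<in>P. \<forall>t::real. 0 < t \<and> t < 1 \<and> w = (\<lambda>e. t * u e + (1 - t) * v e) \<longrightarrow> u = v)"

definition feasible_cone :: "('e \<Rightarrow> real) set \<Rightarrow> ('e \<Rightarrow> real) \<Rightarrow> ('e \<Rightarrow> real) set" where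
  "feasible_cone P p = {v. \<exists>\<epsilon>>0. (\<lambda>e. p e + \<epsilon> * v e) \<in> P}"

definition is_cycle :: "('h \<Rightarrow> nat) \<Rightarrow> 'h set set \<Rightarrow> 'h set set \<Rightarrow> bool" where
  "is_cycle vl F C \<longleftrightarrow> (\<exists>es vs. length es = length vs \<and> length es \<ge> 1 \<and>
      distinct es \<and> distinct vs \<and> set es = C \<and> C \<subseteq> F \<and>
      (\<forall>i<length es. joins vl (es ! i) (vs ! i) (vs ! ((i + 1) mod length es))))"

definition is_tree :: "('h \<Rightarrow> nat) \<Rightarrow> 'h set set \<Rightarrow> bool" where
  "is_tree vl F \<longleftrightarrow> \<not> (\<exists>C. is_cycle vl F C)"

definition is_one_odd_cycle :: "('h \<Rightarrow> nat) \<Rightarrow> 'h set set \<Rightarrow> bool" where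
  "is_one_odd_cycle vl F \<longleftrightarrow> (\<exists>C. is_cycle vl F C \<and> odd (card C) \<and> (\<forall>C'. is_cycle vl F C' \<longrightarrow> C' = C))"

text \<open>every connected component of ({0..<n}, F) is a tree or a one-odd-cycle graph
  (isolated vertices count as trivial trees); components are connected by construction\<close>
definition trees_and_ooc :: "nat \<Rightarrow> ('h \<Rightarrow> nat) \<Rightarrow> 'h set set \<Rightarrow> bool" where
  "trees_and_ooc n vl F \<longleftrightarrow>
     (\<forall>v<n. is_tree vl (edges_in vl F (comp vl F v)) \<or>
            is_one_odd_cycle vl (edges_in vl F (comp vl F v)))"

end

theory Submission
  imports Defs
begin

text \<open>Let S be the static edges and F the non-static edges on which w is positive. Every vector
  in the kernel of vp vanishes on S: for a static edge e, summing the balance equations over the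
  bipartite component of G - e with the signs of its two colour classes leaves only the term of e,
  whose coefficient is nonzero because G is connected and not bipartite. Hence w is a vertex of
  P_G(b) exactly when no nonzero kernel vector is supported on F. If a component of F is neither a
  tree nor a one-odd-cycle graph, it carries a closed walk of even length using some edge an odd
  number of times (an even cycle, or two odd cycles joined by a path), and the alternating
  +1/-1 vector of that walk is such a kernel vector. Conversely, the support of a kernel vector
  inside a tree or one-odd-cycle component has no pendant vertex, so it contains a cycle, necessarily
  the unique odd one; counting degrees shows that every vertex of the support has degree two, and the
  alternating signs forced around an odd cycle make all weights vanish. The feasible cone is read off
  from the linear constraints at any point of P_G(b).\<close>

section \<open>Incidences and walks\<close>

abbreviation incidence :: "('h \<Rightarrow> nat) \<Rightarrow> 'h set \<Rightarrow> nat \<Rightarrow> nat" where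
  "incidence vl e v \<equiv> card {h \<in> e. vl h = v}"

lemma joins_sym: "joins vl e a b \<Longrightarrow> joins vl e b a"
  unfolding joins_def by (metis insert_commute)

lemma joins_image: "joins vl e a b \<Longrightarrow> vl ` e = {a, b}"
  unfolding joins_def by auto

lemma joins_unique: "joins vl e a b \<Longrightarrow> joins vl e u v \<Longrightarrow> (u = a \<and> v = b) \<or> (u = b \<and> v = a)"
  unfolding joins_def by (auto simp: doubleton_eq_iff)

lemma card_2_joinsE: assumes "card e = 2" obtains a b where "joins vl e a b"
  using assms unfolding card_2_iff joins_def by blast

lemma ex_joins: "card e = 2 \<Longrightarrow> a \<in> vl ` e \<Longrightarrow> \<exists>b. joins vl e a b"
  unfolding card_2_iff joins_def by (auto simp: insert_commute)

lemma incidence_joins: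
  "joins vl e a b \<Longrightarrow> incidence vl e x = (if a = x then 1 else 0) + (if b = x then 1 else 0)"
proof -
  assume "joins vl e a b"
  then obtain h h' where e: "e = {h, h'}" "h \<noteq> h'" "vl h = a" "vl h' = b"
    unfolding joins_def by blast
  have "{k \<in> e. vl k = x} = (if a = x then {h} else {}) \<union> (if b = x then {h'} else {})"
    using e by auto
  then show ?thesis using e by (simp add: card_Un_disjoint)
qed

lemma incidence_eq_0_iff: "finite e \<Longrightarrow> incidence vl e x = 0 \<longleftrightarrow> x \<notin> vl ` e"
  by auto

lemma vp_add_scaled: "finite E \<Longrightarrow> vp vl E (\<lambda>e. a e + c * d e) x = vp vl E a x + c * vp vl E d x"
  unfolding vp_def by (simp add: sum.distrib sum_distrib_left algebra_simps)

lemma vp_diff: "vp vl E (\<lambda>e. a e - d e) x = vp vl E a x - vp vl E d x"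
  unfolding vp_def by (simp add: sum_subtractf algebra_simps)

lemma vp_uminus: "vp vl E (\<lambda>e. - d e) x = - vp vl E d x"
  unfolding vp_def by (simp add: sum_negf)

fun walk :: "('h \<Rightarrow> nat) \<Rightarrow> nat \<Rightarrow> ('h set \<times> nat) list \<Rightarrow> bool" where
  "walk vl a [] = True"
| "walk vl a ((e, x) # r) \<longleftrightarrow> joins vl e a x \<and> walk vl x r"

fun walk_end :: "nat \<Rightarrow> ('h set \<times> nat) list \<Rightarrow> nat" where
  "walk_end a [] = a"
| "walk_end a ((e, x) # r) = walk_end x r"

definition closed_walk :: "('h \<Rightarrow> nat) \<Rightarrow> nat \<Rightarrow> ('h set \<times> nat) list \<Rightarrow> bool" where
  "closed_walk vl a r \<longleftrightarrow> walk vl a r \<and> walk_end a r = a"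

fun walk_rev :: "nat \<Rightarrow> ('h set \<times> nat) list \<Rightarrow> ('h set \<times> nat) list" where
  "walk_rev a [] = []"
| "walk_rev a ((e, x) # r) = walk_rev x r @ [(e, a)]"

fun alt_vec :: "('h set \<times> nat) list \<Rightarrow> 'h set \<Rightarrow> int" where
  "alt_vec [] f = 0"
| "alt_vec ((e, x) # r) f = (if e = f then 1 else 0) - alt_vec r f"

abbreviation edge_count :: "('h set \<times> nat) list \<Rightarrow> 'h set \<Rightarrow> nat" where
  "edge_count r f \<equiv> count (mset (map fst r)) f"

lemma walk_append: "walk vl a (r @ r') \<longleftrightarrow> walk vl a r \<and> walk vl (walk_end a r) r'"
  by (induction r arbitrary: a) auto

lemma walk_end_append: "walk_end a (r @ r') = walk_end (walk_end a r) r'"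
  by (induction r arbitrary: a) auto

lemma walk_rev: "walk vl a r \<Longrightarrow> walk vl (walk_end a r) (walk_rev a r) \<and> walk_end (walk_end a r) (walk_rev a r) = a"
  by (induction r arbitrary: a) (auto simp: walk_append walk_end_append joins_sym)

lemma length_walk_rev [simp]: "length (walk_rev a r) = length r"
  by (induction r arbitrary: a) auto

lemma mset_walk_rev [simp]: "image_mset fst (mset (walk_rev a r)) = image_mset fst (mset r)"
  by (induction a r rule: walk_rev.induct) auto

lemma set_walk_rev [simp]: "fst ` set (walk_rev a r) = fst ` set r"
  by (metis list.set_map mset_map mset_walk_rev set_mset_mset)

lemma even_alt_vec_iff: "even (alt_vec r f) \<longleftrightarrow> even (edge_count r f)"
  by (induction r f rule: alt_vec.induct) auto

lemma alt_vec_eq_0: "f \<notin> fst ` set r \<Longrightarrow> alt_vec r f = 0"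
  by (induction r f rule: alt_vec.induct) auto

lemma vp_alt_vec:
  assumes "finite E" "fst ` set r \<subseteq> E" "walk vl a r"
  shows "vp vl E (\<lambda>f. of_int (alt_vec r f)) x =
     (if a = x then 1 else 0) - (-1) ^ length r * (if walk_end a r = x then 1 else 0)"
  using assms(2,3)
proof (induction r arbitrary: a)
  case Nil
  then show ?case by (simp add: vp_def)
next
  case (Cons s r)
  obtain e y where s: "s = (e, y)" by fastforce
  with Cons.prems have "e \<in> E" "joins vl e a y" "walk vl y r" by auto
  have "(\<lambda>f. real_of_int (alt_vec (s # r) f)) = (\<lambda>f. (if e = f then 1 else 0) - of_int (alt_vec r f))"
    by (auto simp: s)
  then have "vp vl E (\<lambda>f. of_int (alt_vec (s # r) f)) x =
        vp vl E (\<lambda>f. if e = f then 1 else 0) x - vp vl E (\<lambda>f. of_int (alt_vec r f)) x"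
    by (simp add: vp_diff)
  also have "vp vl E (\<lambda>f. if e = f then 1 else 0) x = real (incidence vl e x)"
    unfolding vp_def using \<open>e \<in> E\<close> assms(1) by (simp add: if_distrib cong: if_cong)
  also have "\<dots> = (if a = x then 1 else 0) + (if y = x then 1 else 0)"
    using incidence_joins[OF \<open>joins vl e a y\<close>] by simp
  finally show ?case using Cons \<open>walk vl y r\<close> s by simp
qed

lemma vp_alt_vec_closed_even:
  assumes "finite E" "fst ` set r \<subseteq> E" "closed_walk vl a r" "even (length r)"
  shows "vp vl E (\<lambda>f. of_int (alt_vec r f)) x = 0"
proof -
  have "walk vl a r" "walk_end a r = a" using assms(3) unfolding closed_walk_def by auto
  then show ?thesis using vp_alt_vec[OF assms(1,2), of vl a x] assms(4) by simp
qed

lemma walk_of_chain: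
  assumes "\<And>i. i < m \<Longrightarrow> joins vl (es i) (xs i) (xs (Suc i))" "j \<le> m"
  shows "walk vl (xs j) (map (\<lambda>i. (es i, xs (Suc i))) [j..<m]) \<and>
         walk_end (xs j) (map (\<lambda>i. (es i, xs (Suc i))) [j..<m]) = xs m"
  using assms(2)
proof (induction "m - j" arbitrary: j)
  case 0
  then show ?case by simp
next
  case (Suc d)
  then show ?case using assms(1)[of j] by (simp add: upt_conv_Cons)
qed

lemma rtranclp_adj_walk:
  "(adj vl F)\<^sup>*\<^sup>* a b \<Longrightarrow> \<exists>r. walk vl a r \<and> walk_end a r = b \<and> fst ` set r \<subseteq> F"
proof (induction rule: rtranclp_induct)
  case base
  show ?case by (rule exI[of _ "[]"]) simp
next
  case (step y z)
  then obtain r where "walk vl a r" "walk_end a r = y" "fst ` set r \<subseteq> F" by blast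
  moreover from step obtain e where "e \<in> F" "joins vl e y z" unfolding adj_def by blast
  ultimately show ?case
    by (intro exI[of _ "r @ [(e, z)]"]) (simp add: walk_append walk_end_append)
qed

section \<open>Cycles, paths and forests\<close>

lemma is_cycle_subset: "is_cycle vl D C \<Longrightarrow> C \<subseteq> D"
  unfolding is_cycle_def by blast

lemma is_cycle_mono: "is_cycle vl D C \<Longrightarrow> D \<subseteq> D' \<Longrightarrow> is_cycle vl D' C"
  unfolding is_cycle_def by blast

lemma is_cycle_loop: "joins vl f x x \<Longrightarrow> f \<in> D \<Longrightarrow> is_cycle vl D {f}"
  unfolding is_cycle_def by (intro exI[of _ "[f]"] exI[of _ "[x]"]) simp

lemma is_cycle_finite_nonempty: "is_cycle vl D C \<Longrightarrow> finite C \<and> C \<noteq> {}"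
  unfolding is_cycle_def by auto

lemma closed_walk_of_cycle:
  assumes "is_cycle vl D C"
  obtains a r where "closed_walk vl a r" "mset (map fst r) = mset_set C" "a \<in> vl ` \<Union>C"
proof -
  obtain es vs where len: "length es = length vs" "length es \<ge> 1" and "distinct es" "set es = C"
    and J: "\<forall>i<length es. joins vl (es ! i) (vs ! i) (vs ! ((i + 1) mod length es))"
    using assms unfolding is_cycle_def by blast
  define k where "k = length es"
  define xs where "xs i = vs ! (i mod k)" for i
  define r where "r = map (\<lambda>i. (es ! i, xs (Suc i))) [0..<k]"
  have chain: "joins vl (es ! i) (xs i) (xs (Suc i))" if "i < k" for i
    using J that unfolding xs_def k_def by simp
  have "walk vl (xs 0) r \<and> walk_end (xs 0) r = xs k"
    unfolding r_def using chain by (intro walk_of_chain) simp_all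
  moreover have "xs k = xs 0" using len unfolding xs_def k_def by simp
  ultimately have "closed_walk vl (xs 0) r" unfolding closed_walk_def by simp
  moreover have "map fst r = es" unfolding r_def k_def by (simp add: o_def map_nth)
  then have "mset (map fst r) = mset_set C"
    using \<open>distinct es\<close> \<open>set es = C\<close> by (metis mset_set_set)
  moreover have "joins vl (es ! 0) (xs 0) (xs 1)"
    using chain[of 0] len unfolding k_def by fastforce
  then have "xs 0 \<in> vl ` \<Union>C"
    using joins_image \<open>set es = C\<close> len nth_mem[of 0 es] by fastforce
  ultimately show thesis using that by blast
qed

definition path_in :: "('h \<Rightarrow> nat) \<Rightarrow> 'h set set \<Rightarrow> nat list \<Rightarrow> 'h set list \<Rightarrow> bool" where
  "path_in vl D vs es \<longleftrightarrow> length vs = Suc (length es) \<and> distinct vs \<and> distinct es \<and> set es \<subseteq> D \<and>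
     (\<forall>i<length es. joins vl (es ! i) (vs ! i) (vs ! Suc i))"

lemma path_in_first_vertex:
  assumes "path_in vl D vs es" "i < length es" "vs ! 0 \<in> vl ` (es ! i)"
  shows "i = 0"
proof -
  have "joins vl (es ! i) (vs ! i) (vs ! Suc i)" using assms(1,2) unfolding path_in_def by blast
  then have "vs ! 0 = vs ! i \<or> vs ! 0 = vs ! Suc i" using assms(3) joins_image by fastforce
  with assms(1,2) show ?thesis unfolding path_in_def by (auto simp: nth_eq_iff_index_eq)
qed

lemma cycle_of_closing_edge:
  assumes P: "path_in vl D vs es" and j: "0 < j" "j < length vs"
    and g: "g \<in> D" "g \<notin> set es" "joins vl g (vs ! j) (vs ! 0)"
  shows "is_cycle vl D (set (take j es @ [g]))"
  unfolding is_cycle_def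
proof (intro exI conjI)
  let ?es = "take j es @ [g]" and ?vs = "take (Suc j) vs"
  have len: "length vs = Suc (length es)" "j \<le> length es" using P j unfolding path_in_def by auto
  then show "length ?es = length ?vs" "1 \<le> length ?es" by simp_all
  show "distinct ?es" "distinct ?vs" "set ?es \<subseteq> D"
    using P g(1,2) unfolding path_in_def by (auto dest: in_set_takeD)
  show "\<forall>i<length ?es. joins vl (?es ! i) (?vs ! i) (?vs ! ((i + 1) mod length ?es))"
  proof (intro allI impI)
    fix i assume "i < length ?es"
    then consider "i < j" | "i = j" using len by fastforce
    then show "joins vl (?es ! i) (?vs ! i) (?vs ! ((i + 1) mod length ?es))"
    proof cases
      case 1
      then show ?thesis using P len unfolding path_in_def by (simp add: nth_append)
    next
      case 2
      then show ?thesis using g(3) len j by (simp add: nth_append)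
    qed
  qed
qed simp

lemma path_extend_or_cycle:
  assumes P: "path_in vl D vs es" and g: "g \<in> D" "g \<notin> set es" "joins vl g (vs ! 0) u"
  shows "(\<exists>C. is_cycle vl D C) \<or> path_in vl D (u # vs) (g # es)"
proof (cases "u \<in> set vs")
  case True
  then obtain j where j: "j < length vs" "vs ! j = u" by (auto simp: in_set_conv_nth)
  show ?thesis
  proof (cases "j = 0")
    case True
    then show ?thesis using is_cycle_loop g j by fastforce
  next
    case False
    then show ?thesis
      using cycle_of_closing_edge[OF P _ j(1) g(1,2)] joins_sym[OF g(3)] j by auto
  qed
next
  case False
  have "path_in vl D (u # vs) (g # es)"
    unfolding path_in_def
  proof (intro conjI allI impI)
    fix i assume "i < length (g # es)"
    then show "joins vl ((g # es) ! i) ((u # vs) ! i) ((u # vs) ! Suc i)"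
      using P joins_sym[OF g(3)] unfolding path_in_def by (cases i) auto
  qed (use P g False in \<open>auto simp: path_in_def\<close>)
  then show ?thesis by blast
qed

definition no_pendant_vertex :: "('h \<Rightarrow> nat) \<Rightarrow> 'h set set \<Rightarrow> bool" where
  "no_pendant_vertex vl D \<longleftrightarrow> (\<forall>f\<in>D. \<forall>x\<in>vl ` f. \<exists>g\<in>D - {f}. x \<in> vl ` g)"

lemma no_pendant_vertexD:
  assumes "no_pendant_vertex vl D" "f \<in> D" "x \<in> vl ` f"
  obtains g where "g \<in> D" "g \<noteq> f" "x \<in> vl ` g"
proof -
  have "\<forall>x\<in>vl ` f. \<exists>g\<in>D - {f}. x \<in> vl ` g"
    using assms(1,2) unfolding no_pendant_vertex_def by (rule bspec)
  then have "\<exists>g\<in>D - {f}. x \<in> vl ` g" using assms(3) by (rule bspec)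
  then show thesis using that by auto
qed

lemma fresh_edge_at_path_start:
  assumes "no_pendant_vertex vl D" and P: "path_in vl D vs es" and "vs ! 0 \<in> vl ` \<Union>D"
  obtains g where "g \<in> D" "g \<notin> set es" "vs ! 0 \<in> vl ` g"
proof (cases es)
  case Nil
  then show thesis using that assms(3) by auto
next
  case (Cons e es')
  then have "e \<in> D" "joins vl e (vs ! 0) (vs ! 1)" using P unfolding path_in_def by auto
  then have "e \<in> D" "vs ! 0 \<in> vl ` e" using joins_image[of vl e "vs ! 0" "vs ! 1"] by auto
  then obtain g where "g \<in> D" "g \<noteq> e" "vs ! 0 \<in> vl ` g"
    by (rule no_pendant_vertexD[OF assms(1)])
  moreover have "g \<notin> set es"
  proof
    assume "g \<in> set es"
    then obtain i where "i < length es" "es ! i = g" by (auto simp: in_set_conv_nth)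
    then have "i = 0" using path_in_first_vertex[OF P] \<open>vs ! 0 \<in> vl ` g\<close> by blast
    then show False using \<open>g \<noteq> e\<close> Cons \<open>es ! i = g\<close> by simp
  qed
  ultimately show thesis using that by blast
qed

text \<open>A longest path cannot be extended at its first vertex, so it closes up into a cycle.\<close>

lemma ex_cycle_if_no_pendant_vertex:
  assumes fin: "finite D" and two: "\<forall>f\<in>D. card f = 2" and "D \<noteq> {}"
    and "no_pendant_vertex vl D"
  shows "\<exists>C. is_cycle vl D C"
proof (rule ccontr)
  assume acyclic: "\<not> ?thesis"
  define P where "P k \<longleftrightarrow> (\<exists>vs es. path_in vl D vs es \<and> vs ! 0 \<in> vl ` \<Union>D \<and> length es = k)" for k
  obtain f0 where "f0 \<in> D" using \<open>D \<noteq> {}\<close> by blast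
  then obtain h where "h \<in> f0" using two card_2_iff by (metis insertI1)
  then obtain x0 where "x0 \<in> vl ` \<Union>D" using \<open>f0 \<in> D\<close> by blast
  then have "P 0" unfolding P_def path_in_def by (intro exI[of _ "[x0]"] exI[of _ "[]"]) simp
  have bounded: "k \<le> card D" if "P k" for k
  proof -
    from that obtain vs es where "path_in vl D vs es" "length es = k" unfolding P_def by blast
    then have "distinct es" "set es \<subseteq> D" "length es = k" by (simp_all add: path_in_def)
    then show ?thesis using card_mono[OF fin] distinct_card by metis
  qed
  then have "\<forall>k. P k \<longrightarrow> id k < Suc (card D)" by (simp add: less_Suc_eq_le)
  then obtain k where "P k" and k_max: "\<forall>k'. P k' \<longrightarrow> k' \<le> k"
    using ex_has_greatest_nat[of P 0 id "Suc (card D)"] \<open>P 0\<close> by auto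
  then obtain vs es where P: "path_in vl D vs es" and v0: "vs ! 0 \<in> vl ` \<Union>D" and "length es = k"
    unfolding P_def by blast
  obtain g where g: "g \<in> D" "g \<notin> set es" "vs ! 0 \<in> vl ` g"
    using fresh_edge_at_path_start[OF \<open>no_pendant_vertex vl D\<close> P v0] by blast
  then obtain u where u: "joins vl g (vs ! 0) u" using ex_joins two by blast
  then have "path_in vl D (u # vs) (g # es)" using path_extend_or_cycle[OF P g(1,2)] acyclic by blast
  moreover have "u \<in> vl ` \<Union>D" using joins_image[OF u] g(1) by blast
  ultimately have "P (Suc k)"
    unfolding P_def using \<open>length es = k\<close> by (intro exI[of _ "u # vs"] exI[of _ "g # es"]) simp
  then show False using k_max by fastforce
qed

lemma finite_verts: "finite D \<Longrightarrow> \<forall>f\<in>D. card f = 2 \<Longrightarrow> finite (vl ` \<Union>D)"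
  by (metis card.infinite finite_Union finite_imageI zero_neq_numeral)

lemma card_lt_card_verts_if_acyclic:
  "finite D \<Longrightarrow> \<forall>f\<in>D. card f = 2 \<Longrightarrow> \<nexists>C. is_cycle vl D C \<Longrightarrow> D \<noteq> {} \<Longrightarrow>
     card D < card (vl ` \<Union>D)"
proof (induction "card D" arbitrary: D rule: less_induct)
  case less
  then have "\<not> no_pendant_vertex vl D" using ex_cycle_if_no_pendant_vertex by blast
  then obtain f x where f: "f \<in> D" "x \<in> vl ` f" and pendant: "\<forall>g\<in>D - {f}. x \<notin> vl ` g"
    unfolding no_pendant_vertex_def by blast
  obtain y where y: "joins vl f x y" using ex_joins less.prems(2) f by blast
  have "y \<noteq> x" using is_cycle_loop[of vl f x D] y f less.prems(3) by blast
  have fin: "finite (vl ` \<Union>D)" using finite_verts less.prems(1,2) by blast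
  have "vl ` f \<subseteq> vl ` \<Union>D" using f(1) by blast
  then have xy: "x \<in> vl ` \<Union>D" "y \<in> vl ` \<Union>D" using joins_image[OF y] by auto
  show ?case
  proof (cases "D - {f} = {}")
    case True
    then have "D = {f}" using f by auto
    moreover have "card {x, y} \<le> card (vl ` \<Union>D)" using xy fin by (intro card_mono) auto
    ultimately show ?thesis using \<open>y \<noteq> x\<close> by simp
  next
    case False
    have "card (D - {f}) < card D" by (rule card_Diff1_less[OF less.prems(1) f(1)])
    moreover have "\<nexists>C. is_cycle vl (D - {f}) C" using less.prems(3) is_cycle_mono by blast
    ultimately have "card (D - {f}) < card (vl ` \<Union>(D - {f}))"
      using less.hyps less.prems(1,2) False by auto
    also have "\<dots> \<le> card (vl ` \<Union>D - {x})"
      using pendant fin by (intro card_mono) auto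
    also have "\<dots> = card (vl ` \<Union>D) - 1" using xy fin by simp
    finally show ?thesis using f(1) less.prems(1) by (simp add: card_Diff1_less)
  qed
qed

lemma card_le_card_verts_if_unicyclic:
  assumes "finite D" "\<forall>f\<in>D. card f = 2" "g \<in> D" "\<nexists>C. is_cycle vl (D - {g}) C"
  shows "card D \<le> card (vl ` \<Union>D)"
proof (cases "D - {g} = {}")
  case True
  then have "D = {g}" using assms(3) by blast
  moreover have "vl ` \<Union>D \<noteq> {}" using assms(2,3) by fastforce
  moreover have "finite (vl ` \<Union>D)" using finite_verts assms(1,2) by blast
  ultimately show ?thesis by (simp add: Suc_leI card_gt_0_iff)
next
  case False
  then have "card (D - {g}) < card (vl ` \<Union>(D - {g}))"
    using card_lt_card_verts_if_acyclic[of "D - {g}" vl] assms by auto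
  also have "\<dots> \<le> card (vl ` \<Union>D)"
    using finite_verts assms(1,2) by (intro card_mono) auto
  finally show ?thesis using assms(1,3) by (simp add: card_Diff1_less card_Suc_Diff1)
qed

definition deg :: "('h \<Rightarrow> nat) \<Rightarrow> 'h set set \<Rightarrow> nat \<Rightarrow> nat" where
  "deg vl D x = (\<Sum>f\<in>D. incidence vl f x)"

lemma sum_deg:
  assumes "finite D" "\<forall>f\<in>D. card f = 2"
  shows "(\<Sum>x\<in>vl ` \<Union>D. deg vl D x) = 2 * card D"
proof -
  have fin: "finite (vl ` \<Union>D)" using finite_verts assms by blast
  have "(\<Sum>x\<in>vl ` \<Union>D. incidence vl f x) = 2" if "f \<in> D" for f
  proof -
    have "card f = 2" using assms(2) that by blast
    then obtain h h' where f: "f = {h, h'}" "h \<noteq> h'" unfolding card_2_iff by blast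
    then have "joins vl f (vl h) (vl h')" unfolding joins_def by blast
    moreover have "vl h \<in> vl ` \<Union>D" "vl h' \<in> vl ` \<Union>D" using f that by auto
    ultimately show ?thesis using fin by (simp add: incidence_joins sum.distrib)
  qed
  then have "(\<Sum>f\<in>D. \<Sum>x\<in>vl ` \<Union>D. incidence vl f x) = 2 * card D" by simp
  then show ?thesis unfolding deg_def by (subst sum.swap)
qed

lemma deg_eq_2_if_no_pendant:
  assumes fin: "finite D" and two: "\<forall>f\<in>D. card f = 2"
    and "no_pendant_vertex vl D" and "card D \<le> card (vl ` \<Union>D)" and "x \<in> vl ` \<Union>D"
  shows "deg vl D x = 2"
proof -
  have finV: "finite (vl ` \<Union>D)" using finite_verts fin two by blast
  have deg_ge: "deg vl D y \<ge> 2" if "y \<in> vl ` \<Union>D" for y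
  proof -
    from that obtain f where f: "f \<in> D" "y \<in> vl ` f" by auto
    then obtain g where g: "g \<in> D" "g \<noteq> f" "y \<in> vl ` g"
      by (rule no_pendant_vertexD[OF \<open>no_pendant_vertex vl D\<close>])
    have "incidence vl f y \<ge> 1" "incidence vl g y \<ge> 1"
      using f g two card_eq_0_iff incidence_eq_0_iff[of _ vl y] by (metis less_one not_le zero_neq_numeral)+
    moreover have "incidence vl f y + incidence vl g y \<le> deg vl D y"
      unfolding deg_def using f g fin sum_mono2[of D "{f, g}" "\<lambda>e. incidence vl e y"] by simp
    ultimately show ?thesis by linarith
  qed
  show ?thesis
  proof (rule ccontr)
    assume "deg vl D x \<noteq> 2"
    then have "2 < deg vl D x" using deg_ge[OF assms(5)] by simp
    then have "\<exists>y\<in>vl ` \<Union>D. 2 < deg vl D y" using assms(5) by (rule bexI)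
    then have "(\<Sum>y\<in>vl ` \<Union>D. 2) < (\<Sum>y\<in>vl ` \<Union>D. deg vl D y)"
      using deg_ge by (intro sum_strict_mono_ex1[OF finV]) auto
    then show False using sum_deg[OF fin two] assms(4) by simp
  qed
qed

section \<open>Kernel vectors from closed walks of even length\<close>

lemma comp_closed: "f \<in> F \<Longrightarrow> joins vl f a b \<Longrightarrow> a \<in> comp vl F v \<Longrightarrow> b \<in> comp vl F v"
  unfolding comp_def adj_def by (auto intro: rtranclp.rtrancl_into_rtrancl)

lemma image_edges_in_comp:
  assumes "f \<in> edges_in vl F (comp vl F v)" "card f = 2"
  shows "vl ` f \<subseteq> comp vl F v"
proof -
  obtain h where h: "f \<in> F" "h \<in> f" "vl h \<in> comp vl F v" using assms(1) unfolding edges_in_def by blast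
  obtain y where y: "joins vl f (vl h) y" using ex_joins assms(2) \<open>h \<in> f\<close> by blast
  have "y \<in> comp vl F v" using comp_closed[OF h(1) y h(3)] .
  then show ?thesis using joins_image[OF y] h(3) by simp
qed

lemma adj_sym: "adj vl F x y \<Longrightarrow> adj vl F y x"
  unfolding adj_def using joins_sym by blast

lemma rtranclp_adj_comp: "x \<in> comp vl F v \<Longrightarrow> y \<in> comp vl F v \<Longrightarrow> (adj vl F)\<^sup>*\<^sup>* x y"
  unfolding comp_def using adj_sym
  by (metis mem_Collect_eq rtranclp_trans symp_def symp_rtranclp)

lemma closed_walk_through_odd_cycles:
  assumes Ca: "is_cycle vl F Ca" "vl ` \<Union>Ca \<subseteq> comp vl F v" "odd (card Ca)"
    and Cb: "is_cycle vl F Cb" "vl ` \<Union>Cb \<subseteq> comp vl F v" "odd (card Cb)"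
    and f: "f \<in> Ca" "f \<notin> Cb"
  obtains a r where "closed_walk vl a r" "even (length r)" "fst ` set r \<subseteq> F" "odd (edge_count r f)"
proof -
  obtain a ra where ra: "closed_walk vl a ra" "mset (map fst ra) = mset_set Ca" "a \<in> vl ` \<Union>Ca"
    using closed_walk_of_cycle[OF Ca(1)] .
  obtain b rb where rb: "closed_walk vl b rb" "mset (map fst rb) = mset_set Cb" "b \<in> vl ` \<Union>Cb"
    using closed_walk_of_cycle[OF Cb(1)] .
  have fin: "finite Ca" "finite Cb" using is_cycle_finite_nonempty Ca(1) Cb(1) by blast+
  have "(adj vl F)\<^sup>*\<^sup>* a b" using ra(3) rb(3) Ca(2) Cb(2) rtranclp_adj_comp by blast
  then obtain p where p: "walk vl a p" "walk_end a p = b" "fst ` set p \<subseteq> F"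
    using rtranclp_adj_walk by blast
  define r where "r = ra @ p @ rb @ walk_rev a p"
  have "closed_walk vl a r"
    using ra(1) rb(1) p walk_rev[OF p(1)]
    unfolding r_def closed_walk_def by (simp add: walk_append walk_end_append)
  moreover have "even (length r)"
  proof -
    have "length ra = card Ca" "length rb = card Cb"
      using ra(2) rb(2) by (metis size_mset length_map size_mset_set)+
    then show ?thesis using Ca(3) Cb(3) unfolding r_def by simp
  qed
  moreover have "fst ` set r \<subseteq> F"
  proof -
    have "fst ` set ra \<subseteq> F" "fst ` set rb \<subseteq> F"
      using ra(2) rb(2) fin is_cycle_subset[OF Ca(1)] is_cycle_subset[OF Cb(1)]
      by (metis finite_set_mset_mset_set list.set_map set_mset_mset)+
    then show ?thesis using p(3) unfolding r_def by (simp add: image_Un)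
  qed
  moreover have "edge_count r f = 1 + 2 * edge_count p f"
    using ra(2) rb(2) fin f unfolding r_def by simp
  then have "odd (edge_count r f)" by simp
  ultimately show thesis by (rule that)
qed

lemma closed_walk_of_even_cycle:
  assumes C: "is_cycle vl F C" "even (card C)"
  obtains a r f where "closed_walk vl a r" "even (length r)" "fst ` set r \<subseteq> F" "odd (edge_count r f)"
proof -
  obtain a r where r: "closed_walk vl a r" "mset (map fst r) = mset_set C"
    using closed_walk_of_cycle[OF C(1)] by blast
  obtain f where "f \<in> C" and "finite C" using is_cycle_finite_nonempty[OF C(1)] by blast
  have "length r = card C" using r(2) by (metis size_mset length_map size_mset_set)
  moreover have "fst ` set r = C"
    using r(2) \<open>finite C\<close> by (metis finite_set_mset_mset_set list.set_map set_mset_mset)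
  moreover have "edge_count r f = 1" using r(2) \<open>f \<in> C\<close> \<open>finite C\<close> by simp
  ultimately show thesis using r(1) C(2) is_cycle_subset[OF C(1)] by (intro that[of a r f]) auto
qed

lemma is_cycle_in_component:
  assumes C: "is_cycle vl (edges_in vl F (comp vl F v)) C" and two: "\<forall>g\<in>F. card g = 2"
  shows "is_cycle vl F C" "vl ` \<Union>C \<subseteq> comp vl F v"
proof -
  have Fc: "edges_in vl F (comp vl F v) \<subseteq> F" unfolding edges_in_def by blast
  show "is_cycle vl F C" using is_cycle_mono[OF C Fc] .
  show "vl ` \<Union>C \<subseteq> comp vl F v"
  proof
    fix x assume "x \<in> vl ` \<Union>C"
    then obtain g where g: "g \<in> C" "x \<in> vl ` g" by auto
    then have "g \<in> edges_in vl F (comp vl F v)" using is_cycle_subset[OF C] by blast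
    moreover have "card g = 2" using two Fc \<open>g \<in> edges_in vl F (comp vl F v)\<close> by blast
    ultimately show "x \<in> comp vl F v" using image_edges_in_comp g(2) by blast
  qed
qed

lemma closed_walk_if_not_tree_or_one_odd_cycle:
  assumes "\<not> is_tree vl (edges_in vl F (comp vl F v))"
    and "\<not> is_one_odd_cycle vl (edges_in vl F (comp vl F v))"
    and two: "\<forall>g\<in>F. card g = 2"
  obtains a r f where "closed_walk vl a r" "even (length r)" "fst ` set r \<subseteq> F" "odd (edge_count r f)"
proof -
  let ?Fc = "edges_in vl F (comp vl F v)"
  obtain C1 where C1: "is_cycle vl ?Fc C1" using assms(1) unfolding is_tree_def by blast
  consider (even) C where "is_cycle vl ?Fc C" "even (card C)"
    | (two_odd) Ca Cb f where "is_cycle vl ?Fc Ca" "odd (card Ca)" "is_cycle vl ?Fc Cb" "odd (card Cb)"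
        "f \<in> Ca" "f \<notin> Cb"
  proof (cases "even (card C1)")
    case False
    then obtain C2 where "is_cycle vl ?Fc C2" "C2 \<noteq> C1"
      using assms(2) C1 unfolding is_one_odd_cycle_def by blast
    then show thesis using that C1 False by blast
  qed (use C1 in blast)
  then show thesis
  proof cases
    case even
    then show thesis using closed_walk_of_even_cycle is_cycle_in_component(1)[OF _ two] that by metis
  next
    case two_odd
    then show thesis
      using closed_walk_through_odd_cycles[OF is_cycle_in_component[OF _ two] _ is_cycle_in_component[OF _ two]]
        that by metis
  qed
qed

lemma kernel_vector_if_not_tree_or_one_odd_cycle:
  assumes "finite E" "F \<subseteq> E" "\<forall>g\<in>F. card g = 2"
    and "\<not> is_tree vl (edges_in vl F (comp vl F v))"
    and "\<not> is_one_odd_cycle vl (edges_in vl F (comp vl F v))"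
  obtains u :: "'h set \<Rightarrow> real" and f where
    "\<forall>x. vp vl E u x = 0" "\<forall>e. e \<notin> F \<longrightarrow> u e = 0" "u f \<noteq> 0"
proof -
  obtain a r f where r: "closed_walk vl a r" "even (length r)" "fst ` set r \<subseteq> F" "odd (edge_count r f)"
    using closed_walk_if_not_tree_or_one_odd_cycle[OF assms(4,5,3)] .
  let ?u = "\<lambda>e. real_of_int (alt_vec r e)"
  have "\<forall>x. vp vl E ?u x = 0" using vp_alt_vec_closed_even[OF assms(1) _ r(1,2)] r(3) assms(2) by auto
  moreover have "\<forall>e. e \<notin> F \<longrightarrow> ?u e = 0" using r(3) by (auto intro!: alt_vec_eq_0)
  moreover have "?u f \<noteq> 0" using r(4) even_alt_vec_iff[of r f] by auto
  ultimately show thesis by (rule that)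
qed

section \<open>Kernel vectors supported on trees and one-odd-cycle graphs\<close>

lemma vp_eq_vp_support:
  assumes "finite E" "D \<subseteq> E" "\<forall>g\<in>E - D. d g \<noteq> 0 \<longrightarrow> x \<notin> vl ` g"
  shows "vp vl E d x = vp vl D d x"
  unfolding vp_def
proof (rule sum.mono_neutral_right[OF assms(1,2)], rule ballI)
  fix g assume "g \<in> E - D"
  then have "d g = 0 \<or> {h \<in> g. vl h = x} = {}" using assms(3) by auto
  then show "real (incidence vl g x) * d g = 0" by (metis card.empty mult_eq_0_iff of_nat_0)
qed

lemma no_pendant_vertex_if_balanced:
  assumes fin: "finite D" and two: "\<forall>g\<in>D. card g = 2" and nz: "\<forall>g\<in>D. d g \<noteq> 0"
    and bal: "\<forall>x\<in>vl ` \<Union>D. vp vl D d x = 0"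
  shows "no_pendant_vertex vl D"
  unfolding no_pendant_vertex_def
proof (intro ballI, rule ccontr)
  fix f x assume f: "f \<in> D" "x \<in> vl ` f" and pendant: "\<not> (\<exists>g\<in>D - {f}. x \<in> vl ` g)"
  have fin_edge: "finite g" if "g \<in> D" for g using two that card.infinite by force
  have "incidence vl g x = 0" if "g \<in> D - {f}" for g
    using pendant that fin_edge incidence_eq_0_iff by blast
  then have "vp vl D d x = real (incidence vl f x) * d f"
    unfolding vp_def using sum.remove[OF fin f(1), of "\<lambda>g. real (incidence vl g x) * d g"] by simp
  moreover have "incidence vl f x \<noteq> 0" using f fin_edge incidence_eq_0_iff by blast
  moreover have "x \<in> vl ` \<Union>D" using f by blast
  ultimately show False using bal nz f(1) by simp
qed

lemma vp_two_edges_if_deg_2: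
  assumes fin: "finite D" and "deg vl D x = 2"
    and g: "g1 \<in> D" "g2 \<in> D" "g1 \<noteq> g2" "incidence vl g1 x \<ge> 1" "incidence vl g2 x \<ge> 1"
  shows "vp vl D d x = d g1 + d g2"
proof -
  have sub: "{g1, g2} \<subseteq> D" using g by auto
  have "deg vl D x = (\<Sum>g\<in>D - {g1, g2}. incidence vl g x) + incidence vl g1 x + incidence vl g2 x"
    unfolding deg_def using sum.subset_diff[OF sub fin, of "\<lambda>g. incidence vl g x"] g(3) by simp
  then have "(\<Sum>g\<in>D - {g1, g2}. incidence vl g x) = 0" "incidence vl g1 x = 1" "incidence vl g2 x = 1"
    using assms(2) g(4,5) by linarith+
  then have rest: "\<forall>g\<in>D - {g1, g2}. incidence vl g x = 0" using fin by simp
  have "vp vl D d x =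
        (\<Sum>g\<in>D - {g1, g2}. real (incidence vl g x) * d g) + (\<Sum>g\<in>{g1, g2}. real (incidence vl g x) * d g)"
    unfolding vp_def using sum.subset_diff[OF sub fin] .
  also have "\<dots> = d g1 + d g2" using rest \<open>incidence vl g1 x = 1\<close> \<open>incidence vl g2 x = 1\<close> g(3) by simp
  finally show ?thesis .
qed

lemma vp_loop_if_deg_2:
  assumes fin: "finite D" and "deg vl D x = 2" and g: "g \<in> D" "joins vl g x x"
  shows "vp vl D d x = 2 * d g"
proof -
  have "incidence vl g x = 2" using incidence_joins[OF g(2)] by simp
  moreover have "deg vl D x = incidence vl g x + (\<Sum>g'\<in>D - {g}. incidence vl g' x)"
    unfolding deg_def using sum.remove[OF fin g(1)] .
  ultimately have "\<forall>g'\<in>D - {g}. incidence vl g' x = 0" using assms(2) fin by simp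
  then show ?thesis unfolding vp_def using sum.remove[OF fin g(1), of "\<lambda>g. real (incidence vl g x) * d g"]
    \<open>incidence vl g x = 2\<close> by simp
qed

lemma incidence_joins_ge_1: "joins vl e a b \<Longrightarrow> incidence vl e a \<ge> 1 \<and> incidence vl e b \<ge> 1"
  by (simp add: incidence_joins)

lemma odd_cyclic_alternating_eq_0:
  fixes x :: "nat \<Rightarrow> real"
  assumes "odd k" and step: "\<forall>i<k. x i + x (Suc i mod k) = 0" and "i < k"
  shows "x i = 0"
proof -
  have alternate: "x i = (-1) ^ i * x 0" if "i < k" for i
    using that
  proof (induction i)
    case (Suc i)
    then show ?case using step[rule_format, of i] by simp
  qed simp
  have "x (k - 1) + x 0 = 0" using step[rule_format, of "k - 1"] \<open>odd k\<close> by (simp add: odd_pos)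
  then have "x 0 = 0" using alternate[of "k - 1"] \<open>odd k\<close> by (simp add: odd_pos)
  then show ?thesis using alternate[OF \<open>i < k\<close>] by simp
qed

text \<open>A vertex of degree two on the cycle meets only its two cycle edges (or a single loop), so
  balancing there makes the weights of consecutive cycle edges opposite.\<close>

lemma odd_cycle_weights_vanish:
  assumes fin: "finite D" and cyc: "is_cycle vl D C" and odd: "odd (card C)"
    and deg2: "\<forall>x\<in>vl ` \<Union>D. deg vl D x = 2"
    and bal: "\<forall>x\<in>vl ` \<Union>D. vp vl D d x = 0"
    and "g \<in> C"
  shows "d g = 0"
proof -
  obtain es vs where len: "length es = length vs" and "distinct es" "set es = C" "C \<subseteq> D"
    and J: "\<forall>i<length es. joins vl (es ! i) (vs ! i) (vs ! ((i + 1) mod length es))"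
    using cyc unfolding is_cycle_def by blast
  define k where "k = length es"
  have "odd k" using odd \<open>distinct es\<close> \<open>set es = C\<close> distinct_card k_def by metis
  have esD: "es ! i \<in> D" if "i < k" for i using that \<open>set es = C\<close> \<open>C \<subseteq> D\<close> k_def by auto
  have "d (es ! i) + d (es ! (Suc i mod k)) = 0" if "i < k" for i
  proof -
    let ?y = "vs ! (Suc i mod k)"
    have "Suc i mod k < k" using that by simp
    have j: "joins vl (es ! i) (vs ! i) ?y" "joins vl (es ! (Suc i mod k)) ?y (vs ! (Suc (Suc i mod k) mod k))"
      using J that \<open>Suc i mod k < k\<close> k_def by auto
    then have "?y \<in> vl ` \<Union>D" using joins_image[OF j(1)] esD[OF that] by blast
    then have bal_y: "vp vl D d ?y = 0" and "deg vl D ?y = 2"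
      using bal deg2 by blast+
    show ?thesis
    proof (cases "k = 1")
      case True
      then have "joins vl (es ! 0) (vs ! 0) (vs ! 0)" and "i = 0" using j(1) that by auto
      then show ?thesis
        using bal_y vp_loop_if_deg_2[OF fin \<open>deg vl D ?y = 2\<close> esD] that True by simp
    next
      case False
      then have "i \<noteq> Suc i mod k" using that by (cases "Suc i = k") auto
      then have "es ! i \<noteq> es ! (Suc i mod k)"
        using \<open>distinct es\<close> that \<open>Suc i mod k < k\<close> k_def by (simp add: nth_eq_iff_index_eq)
      then show ?thesis using bal_y incidence_joins_ge_1[OF j(1)] incidence_joins_ge_1[OF j(2)]
          vp_two_edges_if_deg_2[OF fin \<open>deg vl D ?y = 2\<close> esD[OF that] esD[OF \<open>Suc i mod k < k\<close>]]
        by simp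
    qed
  qed
  then have "d (es ! i) = 0" if "i < k" for i
    using odd_cyclic_alternating_eq_0[of k "\<lambda>i. d (es ! i)"] \<open>odd k\<close> that by blast
  then show ?thesis using \<open>g \<in> C\<close> \<open>set es = C\<close> k_def by (auto simp: in_set_conv_nth)
qed

lemma balanced_support_empty_if_tree_or_one_odd_cycle:
  assumes finD: "finite D" and twoD: "\<forall>g\<in>D. card g = 2" and nz: "\<forall>g\<in>D. d g \<noteq> 0"
    and bal: "\<forall>x\<in>vl ` \<Union>D. vp vl D d x = 0"
    and "D \<subseteq> G" and "is_tree vl G \<or> is_one_odd_cycle vl G"
  shows "D = {}"
proof (rule ccontr)
  assume "D \<noteq> {}"
  have no_pendant: "no_pendant_vertex vl D" by (rule no_pendant_vertex_if_balanced[OF finD twoD nz bal])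
  then obtain C where C: "is_cycle vl D C" using ex_cycle_if_no_pendant_vertex[OF finD twoD \<open>D \<noteq> {}\<close>] by blast
  then have "\<not> is_tree vl G" using is_cycle_mono \<open>D \<subseteq> G\<close> unfolding is_tree_def by blast
  then have "is_one_odd_cycle vl G" using assms(6) by blast
  then have odd: "odd (card C)" and unique: "\<forall>C'. is_cycle vl G C' \<longrightarrow> C' = C"
    using is_cycle_mono[OF C \<open>D \<subseteq> G\<close>] unfolding is_one_odd_cycle_def by metis+
  obtain g0 where "g0 \<in> C" using is_cycle_finite_nonempty[OF C] by blast
  have "\<nexists>C'. is_cycle vl (D - {g0}) C'"
    using unique is_cycle_mono[of vl "D - {g0}" _ G] \<open>D \<subseteq> G\<close> is_cycle_subset \<open>g0 \<in> C\<close> by blast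
  then have "card D \<le> card (vl ` \<Union>D)"
    using card_le_card_verts_if_unicyclic[OF finD twoD] is_cycle_subset[OF C] \<open>g0 \<in> C\<close> by blast
  then have "\<forall>x\<in>vl ` \<Union>D. deg vl D x = 2" using deg_eq_2_if_no_pendant[OF finD twoD no_pendant] by blast
  then have "d g0 = 0" using odd_cycle_weights_vanish[OF finD C odd _ bal \<open>g0 \<in> C\<close>] by blast
  then show False using nz is_cycle_subset[OF C] \<open>g0 \<in> C\<close> by blast
qed

lemma vp_kernel_vanishes_if_trees_and_one_odd_cycles:
  assumes finE: "finite E" and two: "\<forall>g\<in>E. card g = 2" and FE: "F \<subseteq> E"
    and supp: "\<forall>e. e \<notin> F \<longrightarrow> d e = 0" and ker: "\<forall>x. vp vl E d x = 0"
    and comps: "\<forall>x\<in>vl ` \<Union>F. is_tree vl (edges_in vl F (comp vl F x)) \<or>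
                              is_one_odd_cycle vl (edges_in vl F (comp vl F x))"
  shows "d f = 0"
proof (rule ccontr)
  assume "d f \<noteq> 0"
  then have "f \<in> F" using supp by blast
  then obtain x0 where "x0 \<in> vl ` f" using two FE card_2_iff by (metis image_eqI insertI1 subsetD)
  define Fc where "Fc = edges_in vl F (comp vl F x0)"
  define D where "D = {g \<in> Fc. d g \<noteq> 0}"
  have DE: "D \<subseteq> E" using FE unfolding D_def Fc_def edges_in_def by blast
  then have finD: "finite D" and twoD: "\<forall>g\<in>D. card g = 2"
    using finite_subset[OF _ finE] two by blast+
  have "f \<in> D" using \<open>f \<in> F\<close> \<open>x0 \<in> vl ` f\<close> \<open>d f \<noteq> 0\<close>
    unfolding D_def Fc_def edges_in_def comp_def by auto
  have in_D: "g \<in> D" if "g \<in> E" "d g \<noteq> 0" "x \<in> vl ` g" "x \<in> vl ` \<Union>D" for g x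
  proof -
    have "vl ` \<Union>D \<subseteq> comp vl F x0"
      using image_edges_in_comp twoD unfolding D_def Fc_def by blast
    then show ?thesis using that supp unfolding D_def Fc_def edges_in_def by blast
  qed
  have bal: "\<forall>x\<in>vl ` \<Union>D. vp vl D d x = 0"
  proof
    fix x assume "x \<in> vl ` \<Union>D"
    then have "\<forall>g\<in>E - D. d g \<noteq> 0 \<longrightarrow> x \<notin> vl ` g" using in_D by blast
    from vp_eq_vp_support[OF finE DE this] show "vp vl D d x = 0"
      using ker by simp
  qed
  have "D \<subseteq> Fc" "is_tree vl Fc \<or> is_one_odd_cycle vl Fc"
    using comps \<open>f \<in> F\<close> \<open>x0 \<in> vl ` f\<close> unfolding D_def Fc_def by blast+
  then have "D = {}" using balanced_support_empty_if_tree_or_one_odd_cycle[OF finD twoD _ bal]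
    unfolding D_def by blast
  then show False using \<open>f \<in> D\<close> by blast
qed

section \<open>Static edges\<close>

lemma sum_signed_incidence_joins:
  assumes "finite K" "joins vl f p q"
  shows "(\<Sum>x\<in>K. s x * real (incidence vl f x)) =
    (if p \<in> K then s p else 0) + (if q \<in> K then s q else 0)"
proof -
  have "s x * real (incidence vl f x) = (if p = x then s x else 0) + (if q = x then s x else 0)" for x
    by (simp add: incidence_joins[OF assms(2)])
  then show ?thesis using assms(1) by (simp add: sum.distrib sum.delta)
qed

lemma sum_signed_vp:
  "finite E \<Longrightarrow> (\<Sum>x\<in>K. s x * vp vl E d x) = (\<Sum>f\<in>E. d f * (\<Sum>x\<in>K. s x * real (incidence vl f x)))"
  unfolding vp_def by (simp add: sum_distrib_left sum.swap[of _ K] algebra_simps)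

locale finite_graph =
  fixes n :: nat and vl :: "'h \<Rightarrow> nat" and E :: "'h set set"
  assumes finite_edges: "finite E"
    and card_edge: "\<forall>f\<in>E. card f = 2"
    and labels_lt: "\<forall>f\<in>E. vl ` f \<subseteq> {..<n}"
begin

lemma vp_eq_0_if_ge: assumes "\<not> x < n" shows "vp vl E d x = 0"
  unfolding vp_def
proof (rule sum.neutral, rule ballI)
  fix f assume "f \<in> E"
  then have "{h \<in> f. vl h = x} = {}" using labels_lt assms by fastforce
  then show "real (incidence vl f x) * d f = 0" by (metis card.empty mult_eq_0_iff of_nat_0)
qed

lemma comp_lt: assumes "v < n" "F \<subseteq> E" shows "comp vl F v \<subseteq> {..<n}"
proof
  fix u assume "u \<in> comp vl F v"
  then have "(adj vl F)\<^sup>*\<^sup>* v u" unfolding comp_def by simp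
  then show "u \<in> {..<n}"
  proof (cases rule: rtranclp.cases)
    case (rtrancl_into_rtrancl y)
    then obtain f where "f \<in> F" "joins vl f y u" unfolding adj_def by blast
    then have "u \<in> vl ` f" "f \<in> E" using joins_image[of vl f y u] assms(2) by auto
    then show ?thesis using labels_lt by blast
  qed (use assms(1) in simp)
qed

lemma comp_Diff_edge_eq_all:
  assumes conn: "connected_graph n vl E" and e: "e \<in> E" "joins vl e a a'" and "v < n"
    and ends: "a \<in> comp vl (E - {e}) v \<longleftrightarrow> a' \<in> comp vl (E - {e}) v" and "u < n"
  shows "u \<in> comp vl (E - {e}) v"
proof -
  have "(adj vl E)\<^sup>*\<^sup>* v u" using conn \<open>v < n\<close> \<open>u < n\<close> unfolding connected_graph_def by blast
  then show ?thesis
  proof (induction rule: rtranclp_induct)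
    case base
    then show ?case unfolding comp_def by simp
  next
    case (step y z)
    then obtain f where f: "f \<in> E" "joins vl f y z" unfolding adj_def by blast
    show ?case
    proof (cases "f = e")
      case True
      then show ?thesis using joins_unique[OF e(2)] f(2) step.IH ends by blast
    next
      case False
      then show ?thesis using comp_closed[of f "E - {e}" vl y z v] f step.IH by blast
    qed
  qed
qed

lemma signed_incidence_static_edge_ne_0:
  fixes c :: "nat \<Rightarrow> bool"
  assumes conn: "connected_graph n vl E" and nonbip: "\<not> bipartite n vl E"
    and e: "e \<in> E" "joins vl e a a'" and "v < n"
  defines "K \<equiv> comp vl (E - {e}) v" and "s \<equiv> \<lambda>x. if c x then 1 else - 1 :: real"
  assumes col: "\<And>f p q. f \<in> E - {e} \<Longrightarrow> joins vl f p q \<Longrightarrow> p \<in> K \<Longrightarrow> q \<in> K \<and> c p \<noteq> c q"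
  shows "(if a \<in> K then s a else 0) + (if a' \<in> K then s a' else 0) \<noteq> 0"
proof (cases "a \<in> K \<longleftrightarrow> a' \<in> K")
  case True
  have lt: "a < n" "a' < n" using labels_lt e joins_image[OF e(2)] by auto
  then have all: "u \<in> K" if "u < n" for u
    using comp_Diff_edge_eq_all[OF conn e \<open>v < n\<close> _ that] True unfolding K_def by blast
  have "c a = c a'"
  proof (rule ccontr)
    assume "c a \<noteq> c a'"
    have "c p \<noteq> c q" if "f \<in> edges_in vl E {0..<n}" "joins vl f p q" for f p q
    proof (cases "f = e")
      case True
      then show ?thesis using joins_unique[OF e(2)] that(2) \<open>c a \<noteq> c a'\<close> by metis
    next
      case False
      have "f \<in> E" using that(1) unfolding edges_in_def by blast
      then have "p < n" using labels_lt joins_image[OF that(2)] by auto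
      then show ?thesis using col[of f p q] False \<open>f \<in> E\<close> that(2) all by blast
    qed
    then have "bipartite n vl E" unfolding bipartite_def bipartite_on_def by blast
    then show False using nonbip by blast
  qed
  then show ?thesis using all lt unfolding s_def by simp
next
  case False
  then show ?thesis unfolding s_def by auto
qed

lemma static_edge_component:
  assumes "e \<in> static_edges n vl E"
  obtains v and c :: "nat \<Rightarrow> bool" where "e \<in> E" "v < n"
    "\<And>f p q. f \<in> E - {e} \<Longrightarrow> joins vl f p q \<Longrightarrow> p \<in> comp vl (E - {e}) v \<Longrightarrow>
      q \<in> comp vl (E - {e}) v \<and> c p \<noteq> c q"
proof -
  obtain v where "e \<in> E" "v < n" and bip: "bipartite_on vl (E - {e}) (comp vl (E - {e}) v)"
    using assms unfolding static_edges_def by blast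
  obtain c :: "nat \<Rightarrow> bool"
    where c: "\<forall>f\<in>edges_in vl (E - {e}) (comp vl (E - {e}) v). \<forall>p q. joins vl f p q \<longrightarrow> c p \<noteq> c q"
    using bip unfolding bipartite_on_def by blast
  have "q \<in> comp vl (E - {e}) v \<and> c p \<noteq> c q"
    if "f \<in> E - {e}" "joins vl f p q" "p \<in> comp vl (E - {e}) v" for f p q
  proof
    show "q \<in> comp vl (E - {e}) v" using comp_closed[of f "E - {e}" vl p q v] that by blast
    have "p \<in> vl ` f" using joins_image[OF that(2)] by simp
    then have "f \<in> edges_in vl (E - {e}) (comp vl (E - {e}) v)" using that unfolding edges_in_def by blast
    then show "c p \<noteq> c q" using c that(2) by blast
  qed
  then show thesis using that \<open>e \<in> E\<close> \<open>v < n\<close> by blast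
qed

lemma static_edge_weight_eq_0:
  assumes conn: "connected_graph n vl E" and nonbip: "\<not> bipartite n vl E"
    and "e \<in> static_edges n vl E" and ker: "\<forall>x<n. vp vl E d x = 0"
  shows "d e = 0"
proof -
  obtain v and c :: "nat \<Rightarrow> bool" where e: "e \<in> E" and "v < n"
    and col: "\<And>f p q. f \<in> E - {e} \<Longrightarrow> joins vl f p q \<Longrightarrow> p \<in> comp vl (E - {e}) v \<Longrightarrow>
      q \<in> comp vl (E - {e}) v \<and> c p \<noteq> c q"
    using static_edge_component[OF assms(3)] by blast
  define K where "K = comp vl (E - {e}) v"
  define s where "s x = (if c x then 1 else - 1 :: real)" for x
  define \<phi> where "\<phi> f = (\<Sum>x\<in>K. s x * real (incidence vl f x))" for f
  have K_lt: "K \<subseteq> {..<n}" using comp_lt[OF \<open>v < n\<close>] unfolding K_def by blast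
  then have "finite K" using finite_subset by blast
  have \<phi>_joins: "\<phi> f = (if p \<in> K then s p else 0) + (if q \<in> K then s q else 0)" if "joins vl f p q" for f p q
    unfolding \<phi>_def by (rule sum_signed_incidence_joins[OF \<open>finite K\<close> that])
  have "\<phi> f = 0" if "f \<in> E - {e}" for f
  proof -
    have "card f = 2" using card_edge that by blast
    then obtain p q where j: "joins vl f p q" by (rule card_2_joinsE)
    then show ?thesis using \<phi>_joins[OF j] col[OF that j] col[OF that joins_sym[OF j]]
      unfolding s_def K_def by (cases "p \<in> comp vl (E - {e}) v") auto
  qed
  then have "d e * \<phi> e = (\<Sum>f\<in>E. d f * \<phi> f)"
    using sum.remove[OF finite_edges e, of "\<lambda>f. d f * \<phi> f"] by simp
  also have "\<dots> = (\<Sum>x\<in>K. s x * vp vl E d x)"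
    unfolding \<phi>_def using sum_signed_vp[OF finite_edges] by metis
  also have "\<dots> = 0" using ker K_lt by (simp add: subset_eq)
  finally have "d e * \<phi> e = 0" .
  moreover obtain a a' where j: "joins vl e a a'" using card_edge e card_2_joinsE by blast
  have "\<phi> e \<noteq> 0"
    unfolding \<phi>_joins[OF j] K_def s_def
    by (rule signed_incidence_static_edge_ne_0[where c = c, OF conn nonbip e j \<open>v < n\<close> col])
  ultimately show ?thesis by simp
qed

end

section \<open>Vertices and feasible cones of the polyhedron\<close>

lemma ex_pos_scaled_abs_le:
  fixes w u :: "'a \<Rightarrow> real"
  assumes "finite A" "\<forall>e\<in>A. w e > 0"
  obtains \<epsilon> where "\<epsilon> > 0" "\<forall>e\<in>A. \<epsilon> * \<bar>u e\<bar> \<le> w e"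
proof -
  define \<epsilon> where "\<epsilon> = Min (insert 1 ((\<lambda>e. w e / (\<bar>u e\<bar> + 1)) ` A))"
  have "\<epsilon> > 0" unfolding \<epsilon>_def using assms by (simp add: add_pos_nonneg)
  moreover have "\<epsilon> * \<bar>u e\<bar> \<le> w e" if "e \<in> A" for e
  proof -
    have "\<epsilon> \<le> w e / (\<bar>u e\<bar> + 1)" unfolding \<epsilon>_def using assms(1) that by (intro Min_le) auto
    then have "\<epsilon> * (\<bar>u e\<bar> + 1) \<le> w e" by (simp add: pos_le_divide_eq add_nonneg_pos)
    then show ?thesis using \<open>\<epsilon> > 0\<close> by (simp add: algebra_simps)
  qed
  ultimately show thesis using that by blast
qed

text \<open>If v and -v are both feasible at w, then w lies strictly between the two points
  w + \<epsilon>1 v and w - \<epsilon>2 v of P, which an extreme point forbids unless v = 0.\<close>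

lemma feasible_cone_pointed_at_vertex:
  assumes "is_vertex P w" "v \<in> feasible_cone P w" "(\<lambda>e. - v e) \<in> feasible_cone P w"
  shows "v = (\<lambda>_. 0)"
proof -
  obtain \<epsilon>1 \<epsilon>2 :: real where "\<epsilon>1 > 0" "\<epsilon>2 > 0"
    and p1: "(\<lambda>e. w e + \<epsilon>1 * v e) \<in> P" and p2: "(\<lambda>e. w e + \<epsilon>2 * - v e) \<in> P"
    using assms(2,3) unfolding feasible_cone_def by blast
  define t where "t = \<epsilon>2 / (\<epsilon>1 + \<epsilon>2)"
  have "0 < t" "t < 1" unfolding t_def using \<open>\<epsilon>1 > 0\<close> \<open>\<epsilon>2 > 0\<close> by (simp_all add: field_simps)
  have w_eq: "w = (\<lambda>e. t * (w e + \<epsilon>1 * v e) + (1 - t) * (w e + \<epsilon>2 * - v e))"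
  proof -
    have "t * \<epsilon>1 - (1 - t) * \<epsilon>2 = 0"
      unfolding t_def using \<open>\<epsilon>1 > 0\<close> \<open>\<epsilon>2 > 0\<close> by (simp add: field_simps)
    moreover have "t * (w e + \<epsilon>1 * v e) + (1 - t) * (w e + \<epsilon>2 * - v e) =
        w e + (t * \<epsilon>1 - (1 - t) * \<epsilon>2) * v e" for e
      by (simp add: algebra_simps)
    ultimately show ?thesis by simp
  qed
  have extreme: "\<And>u u' t. u \<in> P \<Longrightarrow> u' \<in> P \<Longrightarrow> 0 < t \<Longrightarrow> t < 1 \<Longrightarrow>
      w = (\<lambda>e. t * u e + (1 - t) * u' e) \<Longrightarrow> u = u'"
    using assms(1) unfolding is_vertex_def by blast
  have eq: "(\<lambda>e. w e + \<epsilon>1 * v e) = (\<lambda>e. w e + \<epsilon>2 * - v e)"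
    by (rule extreme[OF p1 p2 \<open>0 < t\<close> \<open>t < 1\<close> w_eq])
  have "(\<epsilon>1 + \<epsilon>2) * v e = 0" for e using fun_cong[OF eq, of e] by (simp add: algebra_simps)
  moreover have "\<epsilon>1 + \<epsilon>2 \<noteq> 0" using \<open>\<epsilon>1 > 0\<close> \<open>\<epsilon>2 > 0\<close> by simp
  ultimately show ?thesis by (intro ext) simp
qed

lemma add_scaled_mem_P_G_iff:
  assumes "finite E" "w \<in> vp_preimage n vl E b" "t \<noteq> 0"
  shows "(\<lambda>e. w e + t * v e) \<in> P_G n vl E b \<longleftrightarrow>
    v \<in> vp_preimage n vl E (\<lambda>_. 0) \<and> (\<forall>e\<in>E - static_edges n vl E. 0 \<le> w e + t * v e)"
  using assms vp_add_scaled[OF assms(1), where a = w and c = t and d = v]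
  unfolding P_G_def vp_preimage_def edge_space_def by auto

lemma feasible_cone_P_G:
  assumes finE: "finite E" and wP: "w \<in> P_G n vl E b"
  defines "S \<equiv> static_edges n vl E" and "F \<equiv> {e \<in> E - static_edges n vl E. w e > 0}"
  shows "feasible_cone (P_G n vl E b) w = {v \<in> vp_preimage n vl E (\<lambda>_. 0). \<forall>e \<in> E - (S \<union> F). v e \<ge> 0}"
proof (intro equalityI subsetI CollectI conjI)
  have w: "w \<in> vp_preimage n vl E b" and w_nonneg: "\<forall>e\<in>E - S. w e \<ge> 0"
    using wP unfolding P_G_def S_def by auto
  {
    fix v assume "v \<in> feasible_cone (P_G n vl E b) w"
    then obtain \<epsilon> :: real where "\<epsilon> > 0" and "(\<lambda>e. w e + \<epsilon> * v e) \<in> P_G n vl E b"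
      unfolding feasible_cone_def by blast
    then have v: "v \<in> vp_preimage n vl E (\<lambda>_. 0)" and nonneg: "\<forall>e\<in>E - S. 0 \<le> w e + \<epsilon> * v e"
      using add_scaled_mem_P_G_iff[OF finE w] unfolding S_def by auto
    show "v \<in> vp_preimage n vl E (\<lambda>_. 0)" by (fact v)
    show "\<forall>e \<in> E - (S \<union> F). v e \<ge> 0"
    proof
      fix e assume e: "e \<in> E - (S \<union> F)"
      then have "w e = 0" using w_nonneg unfolding F_def S_def by force
      moreover have "0 \<le> w e + \<epsilon> * v e" using nonneg e by blast
      ultimately show "v e \<ge> 0" using \<open>\<epsilon> > 0\<close> by (simp add: zero_le_mult_iff)
    qed
  }
  fix v assume "v \<in> {v \<in> vp_preimage n vl E (\<lambda>_. 0). \<forall>e \<in> E - (S \<union> F). v e \<ge> 0}"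
  then have v: "v \<in> vp_preimage n vl E (\<lambda>_. 0)" and v_nonneg: "\<forall>e \<in> E - (S \<union> F). v e \<ge> 0" by auto
  have "finite F" "\<forall>e\<in>F. w e > 0" unfolding F_def using finE by auto
  then obtain \<epsilon> where "\<epsilon> > 0" and small: "\<forall>e\<in>F. \<epsilon> * \<bar>v e\<bar> \<le> w e"
    by (rule ex_pos_scaled_abs_le[where u = v])
  have "0 \<le> w e + \<epsilon> * v e" if "e \<in> E - S" for e
  proof (cases "e \<in> F")
    case True
    have "- (\<epsilon> * v e) \<le> \<epsilon> * \<bar>v e\<bar>" using \<open>\<epsilon> > 0\<close> by (simp add: abs_if)
    then show ?thesis using small True by fastforce
  next
    case False
    then show ?thesis using v_nonneg w_nonneg that \<open>\<epsilon> > 0\<close> by simp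
  qed
  then have "(\<lambda>e. w e + \<epsilon> * v e) \<in> P_G n vl E b"
    using add_scaled_mem_P_G_iff[OF finE w] v \<open>\<epsilon> > 0\<close> unfolding S_def by simp
  then show "v \<in> feasible_cone (P_G n vl E b) w" unfolding feasible_cone_def using \<open>\<epsilon> > 0\<close> by blast
qed


lemma convex_combination_le_0_imp_eq_0:
  fixes t x y :: real
  assumes "0 < t" "t < 1" "0 \<le> x" "0 \<le> y" "t * x + (1 - t) * y \<le> 0"
  shows "x = 0" "y = 0"
  using assms by (smt (verit) mult_nonneg_nonneg mult_pos_pos)+

context finite_graph
begin

lemma trees_and_ooc_if_vertex:
  assumes vertex: "is_vertex (P_G n vl E b) w"
  shows "trees_and_ooc n vl {e \<in> E - static_edges n vl E. w e > 0}"
proof (rule ccontr)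
  let ?S = "static_edges n vl E"
  let ?F = "{e \<in> E - ?S. w e > 0}"
  assume "\<not> trees_and_ooc n vl ?F"
  then obtain v where "\<not> is_tree vl (edges_in vl ?F (comp vl ?F v))"
    and "\<not> is_one_odd_cycle vl (edges_in vl ?F (comp vl ?F v))"
    unfolding trees_and_ooc_def by blast
  moreover have "?F \<subseteq> E" "\<forall>g\<in>?F. card g = 2" using card_edge by auto
  ultimately obtain u f where ker: "\<forall>x. vp vl E u x = 0" and supp: "\<forall>e. e \<notin> ?F \<longrightarrow> u e = 0"
    and "u f \<noteq> 0"
    using kernel_vector_if_not_tree_or_one_odd_cycle[OF finite_edges] by blast
  have wP: "w \<in> P_G n vl E b" using vertex unfolding is_vertex_def by blast
  have "u' \<in> feasible_cone (P_G n vl E b) w" if "u' = u \<or> u' = (\<lambda>e. - u e)" for u'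
  proof -
    have "u' \<in> vp_preimage n vl E (\<lambda>_. 0)"
      using that ker supp unfolding vp_preimage_def edge_space_def by (auto simp: vp_uminus)
    moreover have "\<forall>e \<in> E - (?S \<union> ?F). u' e \<ge> 0" using that supp by auto
    ultimately show ?thesis using feasible_cone_P_G[OF finite_edges wP] by blast
  qed
  then have "u = (\<lambda>_. 0)" using feasible_cone_pointed_at_vertex[OF vertex] by blast
  then show False using \<open>u f \<noteq> 0\<close> by simp
qed

lemma P_G_diff_in_kernel:
  assumes "p \<in> P_G n vl E b" "q \<in> P_G n vl E b"
  shows "vp vl E (\<lambda>e. p e - q e) x = 0"
proof (cases "x < n")
  case True
  then show ?thesis using assms unfolding P_G_def vp_preimage_def by (simp add: vp_diff)
qed (rule vp_eq_0_if_ge)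

lemma P_G_split_agrees_off_support:
  assumes conn: "connected_graph n vl E" and nonbip: "\<not> bipartite n vl E"
    and p: "p \<in> P_G n vl E b" and q: "q \<in> P_G n vl E b" and t: "0 < t" "t < 1"
    and w: "w = (\<lambda>e. t * p e + (1 - t) * q e)" and e: "e \<notin> {e \<in> E - static_edges n vl E. w e > 0}"
  shows "p e = q e"
proof -
  consider "e \<notin> E" | "e \<in> static_edges n vl E" | "e \<in> E - static_edges n vl E" "w e \<le> 0"
    using e by force
  then show ?thesis
  proof cases
    case 1
    then show ?thesis using p q unfolding P_G_def vp_preimage_def edge_space_def by auto
  next
    case 2
    then have "p e - q e = 0"
      using static_edge_weight_eq_0[OF conn nonbip] P_G_diff_in_kernel[OF p q] by blast
    then show ?thesis by simp
  next
    case 3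
    then have "0 \<le> p e" "0 \<le> q e" "t * p e + (1 - t) * q e \<le> 0"
      using p q fun_cong[OF w, of e] unfolding P_G_def by auto
    then show ?thesis using convex_combination_le_0_imp_eq_0[OF t] by (metis eq_iff_diff_eq_0)
  qed
qed

lemma vertex_if_trees_and_ooc:
  assumes conn: "connected_graph n vl E" and nonbip: "\<not> bipartite n vl E"
    and wP: "w \<in> P_G n vl E b" and comps: "trees_and_ooc n vl {e \<in> E - static_edges n vl E. w e > 0}"
  shows "is_vertex (P_G n vl E b) w"
  unfolding is_vertex_def
proof (intro conjI ballI allI impI wP)
  let ?F = "{e \<in> E - static_edges n vl E. w e > 0}"
  fix p q and t :: real
  assume p: "p \<in> P_G n vl E b" and q: "q \<in> P_G n vl E b"
    and t: "0 < t \<and> t < 1 \<and> w = (\<lambda>e. t * p e + (1 - t) * q e)"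
  have supp: "\<forall>e. e \<notin> ?F \<longrightarrow> p e - q e = 0"
    using P_G_split_agrees_off_support[OF conn nonbip p q] t by auto
  have "\<forall>x\<in>vl ` \<Union>?F. is_tree vl (edges_in vl ?F (comp vl ?F x)) \<or>
      is_one_odd_cycle vl (edges_in vl ?F (comp vl ?F x))"
    using comps labels_lt unfolding trees_and_ooc_def by blast
  moreover have "?F \<subseteq> E" by blast
  ultimately have "p e - q e = 0" for e
    using vp_kernel_vanishes_if_trees_and_one_odd_cycles[OF finite_edges card_edge _ supp]
      P_G_diff_in_kernel[OF p q] by blast
  then show "p = q" by (intro ext) simp
qed

end

lemma finite_graph_ribbon_edges:
  assumes "is_ribbon_graph g n \<kappa> H s0 s1 vl"
  shows "finite_graph n vl (edges H s1)"
proof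
  have "finite H" and s1: "bij_betw s1 H H" "\<forall>h\<in>H. s1 h \<noteq> h" and "vl ` H = {0..<n}"
    using assms unfolding is_ribbon_graph_def by auto
  have edges: "edges H s1 = (\<lambda>h. {h, s1 h}) ` H" unfolding edges_def by blast
  show "finite (edges H s1)" unfolding edges using \<open>finite H\<close> by simp
  show "\<forall>f\<in>edges H s1. card f = 2" unfolding edges using s1(2) by auto
  show "\<forall>f\<in>edges H s1. vl ` f \<subseteq> {..<n}"
    unfolding edges using bij_betw_apply[OF s1(1)] \<open>vl ` H = {0..<n}\<close> by fastforce
qed

theorem lemmaA5:
  fixes g n :: nat and \<kappa> :: "nat list" and H :: "'h set"
    and s0 s1 :: "'h \<Rightarrow> 'h" and vl :: "'h \<Rightarrow> nat"
    and b :: "nat \<Rightarrow> real" and w :: "'h set \<Rightarrow> real"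
  assumes RG: "is_ribbon_graph g n \<kappa> H s0 s1 vl"
    and nonbip: "\<not> bipartite n vl (edges H s1)"
    and w: "w \<in> vp_preimage n vl (edges H s1) b"
  defines "E \<equiv> edges H s1"
    and "S \<equiv> static_edges n vl (edges H s1)"
    and "F \<equiv> {e \<in> edges H s1 - static_edges n vl (edges H s1). w e > 0}"
  shows "(is_vertex (P_G n vl E b) w \<longleftrightarrow>
            (\<forall>e \<in> E - S. w e \<ge> 0) \<and> trees_and_ooc n vl F)
       \<and> (is_vertex (P_G n vl E b) w \<longrightarrow>
            feasible_cone (P_G n vl E b) w =
              {v \<in> vp_preimage n vl E (\<lambda>_. 0). \<forall>e \<in> E - (S \<union> F). v e \<ge> 0})"
proof -
  interpret finite_graph n vl E unfolding E_def by (rule finite_graph_ribbon_edges[OF RG])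
  have conn: "connected_graph n vl E" using RG unfolding is_ribbon_graph_def E_def by blast
  have F: "F = {e \<in> E - static_edges n vl E. w e > 0}" and S: "S = static_edges n vl E"
    unfolding F_def S_def E_def by simp_all
  have P_G_iff: "w \<in> P_G n vl E b \<longleftrightarrow> (\<forall>e \<in> E - S. w e \<ge> 0)"
    using w unfolding P_G_def E_def S_def by blast
  have "is_vertex (P_G n vl E b) w \<longleftrightarrow> (\<forall>e \<in> E - S. w e \<ge> 0) \<and> trees_and_ooc n vl F"
  proof
    assume vertex: "is_vertex (P_G n vl E b) w"
    then have "w \<in> P_G n vl E b" unfolding is_vertex_def by blast
    then show "(\<forall>e \<in> E - S. w e \<ge> 0) \<and> trees_and_ooc n vl F"
      using P_G_iff trees_and_ooc_if_vertex[OF vertex] unfolding F by blast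
  next
    assume "(\<forall>e \<in> E - S. w e \<ge> 0) \<and> trees_and_ooc n vl F"
    then show "is_vertex (P_G n vl E b) w"
      using vertex_if_trees_and_ooc[OF conn nonbip[folded E_def]] P_G_iff unfolding F by blast
  qed
  moreover have "feasible_cone (P_G n vl E b) w =
      {v \<in> vp_preimage n vl E (\<lambda>_. 0). \<forall>e \<in> E - (S \<union> F). v e \<ge> 0}"
    if "is_vertex (P_G n vl E b) w"
    using that feasible_cone_P_G[OF finite_edges] unfolding is_vertex_def F S by blast
  ultimately show ?thesis by blast
qed

end
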